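(* Let $K$ be the Knaster–Kuratowski fan defined below. Then $K+S^1$ has non-empty interior.
   Context: Let $C=C_{1/3}-\tfrac12\subset[-\tfrac12,\tfrac12]$ be the translate of the middle-third Cantor set $C_{1/3}=\{\tfrac23\sum_{k\ge1}a_k3^{-(k-1)}:a_k\in\{0,1\}\}$. Let $E\subset C$ be the set of points of $C$ which are endpoints of deleted (removed) intervals, and $F=C\setminus E$. For $c\in C$ let $\ell_c=\{(x,cx):x\in[0,1]\}$. Put $K_E=\bigcup_{c\in E}\{(x,y)\in\ell_c:x\in\mathbb{Q}\}$, $K_F=\bigcup_{c\in F}\{(x,y)\in\ell_c:x\notin\mathbb{Q}\}$, and $K=K_E\cup K_F$. $S^1$ is the Euclidean unit circle and $X+Y=\{x+y:x\in X,y\in Y\}$. *)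

theory Defs
  imports "HOL-Analysis.Analysis"
begin

text \<open>The translated middle-third Cantor set C = C_{1/3} - 1/2.\<close>
definition cantorC :: "real set" where
  "cantorC = {(\<Sum>n. (if a n then 1 else 0) * ((2/3) * (1/3) ^ n)) - 1/2 | a :: nat \<Rightarrow> bool. True}"

definition deleted_interval :: "real \<Rightarrow> real \<Rightarrow> bool" where
  "deleted_interval a b \<longleftrightarrow> a < b \<and> a \<in> cantorC \<and> b \<in> cantorC \<and> {a<..<b} \<inter> cantorC = {}"

definition cantorE :: "real set" where
  "cantorE = {c \<in> cantorC. \<exists>a b. deleted_interval a b \<and> (c = a \<or> c = b)}"

definition cantorF :: "real set" where
  "cantorF = cantorC - cantorE"

text \<open>The plane is modelled as the complex numbers; (x,y) is Complex x y.\<close>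
definition KK_E :: "complex set" where
  "KK_E = (\<Union>c\<in>cantorE. {Complex x (c * x) | x. x \<in> {0..1} \<and> x \<in> \<rat>})"

definition KK_F :: "complex set" where
  "KK_F = (\<Union>c\<in>cantorF. {Complex x (c * x) | x. x \<in> {0..1} \<and> x \<notin> \<rat>})"

definition KK_fan :: "complex set" where
  "KK_fan = KK_E \<union> KK_F"

definition set_sum :: "complex set \<Rightarrow> complex set \<Rightarrow> complex set" where
  "set_sum X Y = {x + y | x y. x \<in> X \<and> y \<in> Y}"

end

theory Submission
  imports Defs
begin

text \<open>Fix a point z slightly below and to the left of the origin, inside the unit disc. For every
  slope c in [-1/2,1/2] the segment from 0 to (1,c) starts inside the unit circle around z and ends
  outside it, so it meets that circle at some abscissa x(c) in [0,1]; since z lies well below all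
  these segments, x(c) determines c. Deleted intervals are disjoint and each contains a rational, so
  E is countable, while C is uncountable; hence x is injective on the uncountable set F and some
  x(c) with c in F is irrational. The corresponding point of K_F lies at distance 1 from z, so an
  open neighbourhood of such points z lies in K + S^1.\<close>

lemma summable_select:
  fixes w :: "nat \<Rightarrow> real"
  assumes "summable w" "\<And>n. 0 \<le> w n"
  shows "summable (\<lambda>n. (if a n then 1 else 0) * w n)"
  by (rule summable_comparison_test'[OF assms(1), of 0]) (use assms(2) in auto)

lemma inj_superincreasing_sum:
  fixes w :: "nat \<Rightarrow> real"
  assumes w: "summable w" "\<And>n. 0 \<le> w n"
    and superincreasing: "\<And>n. (\<Sum>k. w (k + Suc n)) < w n"
  shows "inj (\<lambda>a. \<Sum>n. (if a n then 1 else 0) * w n)"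
proof (rule injI, rule ccontr)
  fix a b :: "nat \<Rightarrow> bool"
  assume eq: "(\<Sum>n. (if a n then 1 else 0) * w n) = (\<Sum>n. (if b n then 1 else 0) * w n)"
    and "a \<noteq> b"
  define n where "n = (LEAST k. a k \<noteq> b k)"
  have differ: "a n \<noteq> b n"
    unfolding n_def by (rule LeastI_ex) (use \<open>a \<noteq> b\<close> in auto)
  have agree: "k < n \<Longrightarrow> a k = b k" for k
    unfolding n_def using not_less_Least by blast
  define d where "d k = (if a k then 1 else 0) * w k - (if b k then 1 else 0) * w k" for k
  have d_bound: "\<bar>d k\<bar> \<le> w k" for k
    using w(2)[of k] by (auto simp: d_def)
  have "summable d"
    unfolding d_def by (intro summable_diff summable_select w)
  have tail_summable: "summable (\<lambda>k. w (k + Suc n))"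
    using summable_ignore_initial_segment[OF w(1)] .
  have tail_abs_summable: "summable (\<lambda>k. \<bar>d (k + Suc n)\<bar>)"
    by (rule summable_comparison_test'[OF tail_summable, of 0]) (use d_bound in auto)
  have "0 = suminf d"
    using eq suminf_diff[OF summable_select[OF w, of a] summable_select[OF w, of b]]
    by (simp add: d_def[abs_def])
  also have "\<dots> = (\<Sum>k. d (k + Suc n)) + (\<Sum>i<Suc n. d i)"
    by (rule suminf_split_initial_segment[OF \<open>summable d\<close>])
  also have "(\<Sum>i<Suc n. d i) = d n"
    using agree by (simp add: d_def)
  finally have "\<bar>d n\<bar> = \<bar>\<Sum>k. d (k + Suc n)\<bar>" by linarith
  also have "\<dots> \<le> (\<Sum>k. \<bar>d (k + Suc n)\<bar>)"
    by (rule summable_rabs[OF tail_abs_summable])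
  also have "\<dots> \<le> (\<Sum>k. w (k + Suc n))"
    by (intro suminf_le d_bound tail_abs_summable tail_summable)
  also have "\<dots> < w n" by (rule superincreasing)
  finally show False
    using differ by (auto simp: d_def)
qed

definition cantor_weight :: "nat \<Rightarrow> real" where
  "cantor_weight n = (2/3) * (1/3) ^ n"

lemma summable_cantor_weight: "summable cantor_weight"
  unfolding cantor_weight_def by (intro summable_mult summable_geometric) simp

lemma suminf_cantor_weight: "(\<Sum>n. cantor_weight n) = 1"
proof -
  have "(\<Sum>n. cantor_weight n) = 2/3 * (\<Sum>n. (1/3::real) ^ n)"
    unfolding cantor_weight_def by (intro suminf_mult summable_geometric) simp
  also have "(\<Sum>n. (1/3::real) ^ n) = 3/2"
    by (subst suminf_geometric) auto
  finally show ?thesis by simp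
qed

lemma suminf_cantor_weight_tail: "(\<Sum>k. cantor_weight (k + m)) = (1/3) ^ m"
proof -
  have "(\<Sum>k. cantor_weight (k + m)) = (\<Sum>k. (1/3) ^ m * cantor_weight k)"
    by (simp add: cantor_weight_def power_add mult_ac)
  also have "\<dots> = (1/3) ^ m"
    using suminf_mult[OF summable_cantor_weight] suminf_cantor_weight by simp
  finally show ?thesis .
qed

definition cantor_point :: "(nat \<Rightarrow> bool) \<Rightarrow> real" where
  "cantor_point a = (\<Sum>n. (if a n then 1 else 0) * cantor_weight n) - 1/2"

lemma cantorC_eq_range: "cantorC = range cantor_point"
  unfolding cantorC_def cantor_point_def cantor_weight_def by auto

lemma inj_cantor_point: "inj cantor_point"
proof -
  have "inj (\<lambda>a. \<Sum>n. (if a n then 1 else 0) * cantor_weight n)"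
  proof (rule inj_superincreasing_sum[OF summable_cantor_weight])
    fix n
    show "0 \<le> cantor_weight n"
      by (simp add: cantor_weight_def)
    show "(\<Sum>k. cantor_weight (k + Suc n)) < cantor_weight n"
      unfolding suminf_cantor_weight_tail by (simp add: cantor_weight_def)
  qed
  then show ?thesis
    unfolding cantor_point_def inj_def by simp
qed

lemma abs_cantorC_le: "c \<in> cantorC \<Longrightarrow> \<bar>c\<bar> \<le> 1/2"
proof -
  assume "c \<in> cantorC"
  then obtain a where c: "c = cantor_point a"
    unfolding cantorC_eq_range by auto
  have "0 \<le> (\<Sum>n. (if a n then 1 else 0) * cantor_weight n)"
    by (intro suminf_nonneg summable_select summable_cantor_weight) (auto simp: cantor_weight_def)
  moreover have "(\<Sum>n. (if a n then 1 else 0) * cantor_weight n) \<le> (\<Sum>n. cantor_weight n)"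
    by (intro suminf_le summable_select summable_cantor_weight) (auto simp: cantor_weight_def)
  ultimately show ?thesis
    using suminf_cantor_weight by (simp add: c cantor_point_def abs_if)
qed

lemma uncountable_UNIV_nat_bool: "uncountable (UNIV :: (nat \<Rightarrow> bool) set)"
proof -
  have "range f \<noteq> UNIV" for f :: "nat \<Rightarrow> nat \<Rightarrow> bool"
  proof
    assume "range f = UNIV"
    then obtain n where "f n = (\<lambda>k. \<not> f k k)" by (metis UNIV_I imageE)
    then show False by metis
  qed
  then show ?thesis
    unfolding uncountable_def by auto
qed

lemma uncountable_cantorC: "uncountable cantorC"
  using countable_image_inj_on[OF _ inj_cantor_point] uncountable_UNIV_nat_bool
  by (auto simp: cantorC_eq_range)

lemma deleted_interval_unique:
  assumes "deleted_interval a b" "deleted_interval a' b'"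
    and "q \<in> {a<..<b}" "q \<in> {a'<..<b'}"
  shows "a = a' \<and> b = b'"
proof -
  have "a' \<notin> {a<..<b}" "a \<notin> {a'<..<b'}" "b' \<notin> {a<..<b}" "b \<notin> {a'<..<b'}"
    using assms(1,2) unfolding deleted_interval_def by blast+
  then show ?thesis
    using assms(3,4) by auto
qed

lemma countable_deleted_intervals: "countable {(a, b). deleted_interval a b}"
proof -
  let ?D = "{(a, b). deleted_interval a b}"
  define q where "q p = (SOME r. r \<in> \<rat> \<and> r \<in> {fst p<..<snd p})" for p :: "real \<times> real"
  have q: "q p \<in> \<rat> \<and> q p \<in> {fst p<..<snd p}" if "p \<in> ?D" for p
    unfolding q_def
  proof (rule someI_ex)
    show "\<exists>r. r \<in> \<rat> \<and> r \<in> {fst p<..<snd p}"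
      using that Rats_dense_in_real[of "fst p" "snd p"] by (auto simp: deleted_interval_def)
  qed
  have "countable (q ` ?D)"
    using q by (intro countable_subset[OF _ countable_rat]) auto
  moreover have "inj_on q ?D"
    by (rule inj_onI) (use q deleted_interval_unique in \<open>fastforce simp: prod_eq_iff\<close>)
  ultimately show ?thesis
    by (rule countable_image_inj_on)
qed

lemma countable_cantorE: "countable cantorE"
proof -
  let ?D = "{(a, b). deleted_interval a b}"
  have "cantorE \<subseteq> fst ` ?D \<union> snd ` ?D"
    unfolding cantorE_def by force
  moreover have "countable (fst ` ?D \<union> snd ` ?D)"
    using countable_deleted_intervals by simp
  ultimately show ?thesis
    by (rule countable_subset)
qed

lemma uncountable_cantorF: "uncountable cantorF"
  unfolding cantorF_def by (intro uncountable_minus_countable uncountable_cantorC countable_cantorE)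

lemma segment_meets_unit_circle:
  assumes "norm z \<le> 1" "Re z \<le> 0"
  obtains x where "x \<in> {0..1}" "dist z (Complex x (c * x)) = 1"
proof -
  let ?f = "\<lambda>x. dist z (Complex x (c * x))"
  have "?f 0 \<le> 1"
    using assms(1) by (simp add: dist_norm Complex_eq)
  moreover have "1 \<le> ?f 1"
  proof -
    have "1 \<le> \<bar>Re (z - Complex 1 c)\<bar>"
      using assms(2) by simp
    also have "\<dots> \<le> ?f 1"
      using abs_Re_le_cmod[of "z - Complex 1 c"] by (simp add: dist_norm)
    finally show ?thesis .
  qed
  moreover have "continuous_on {0..1} ?f"
  proof -
    have "Complex x (c * x) = of_real x * Complex 1 c" for x
      by (simp add: complex_eq_iff)
    then show ?thesis
      by (simp only:) (intro continuous_intros)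
  qed
  ultimately show ?thesis
    using IVT'[of ?f 0 1 1] that by auto
qed

text \<open>Below the line Im = -1/2 the vertical offset c x - Im z has a fixed sign, so it is determined
  by the distance and the abscissa.\<close>

lemma slope_determined_by_distance:
  assumes "Im z < -1/2" "\<bar>c\<bar> \<le> 1/2" "\<bar>c'\<bar> \<le> 1/2" "x \<in> {0<..1}"
    and "dist z (Complex x (c * x)) = dist z (Complex x (c' * x))"
  shows "c = c'"
proof -
  have "\<bar>c * x\<bar> \<le> 1/2" "\<bar>c' * x\<bar> \<le> 1/2"
    using assms(2-4) mult_mono[of "\<bar>c\<bar>" "1/2" x 1] mult_mono[of "\<bar>c'\<bar>" "1/2" x 1]
    by (auto simp: abs_mult)
  then have pos: "0 < c * x - Im z" "0 < c' * x - Im z"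
    using assms(1) by auto
  have "(Re z - x)\<^sup>2 + (c * x - Im z)\<^sup>2 = (Re z - x)\<^sup>2 + (c' * x - Im z)\<^sup>2"
    using assms(5) by (simp add: dist_norm cmod_def power2_commute)
  then have "c * x - Im z = c' * x - Im z"
    using pos by (simp add: power2_eq_iff_nonneg)
  then show ?thesis
    using assms(4) by simp
qed

lemma mem_KK_fan_plus_sphere:
  assumes "norm z < 1" "Re z \<le> 0" "Im z < -1/2"
  shows "z \<in> set_sum KK_fan (sphere 0 1)"
proof -
  define X where "X c = (SOME x. x \<in> {0..1} \<and> dist z (Complex x (c * x)) = 1)" for c
  have X: "X c \<in> {0..1} \<and> dist z (Complex (X c) (c * X c)) = 1" for c
    unfolding X_def
    by (rule someI_ex) (use segment_meets_unit_circle[OF less_imp_le[OF assms(1)] assms(2)] in blast)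
  have X_nonzero: "X c \<noteq> 0" for c
    using X[of c] assms(1) by (auto simp: dist_norm Complex_eq)
  have "inj_on X cantorC"
  proof (rule inj_onI)
    fix c c' assume "c \<in> cantorC" "c' \<in> cantorC" "X c = X c'"
    then show "c = c'"
      using X[of c] X[of c'] X_nonzero[of c]
      by (intro slope_determined_by_distance[OF assms(3), of c c' "X c"] abs_cantorC_le) auto
  qed
  then have "inj_on X cantorF"
    by (rule inj_on_subset) (auto simp: cantorF_def)
  have "\<exists>c\<in>cantorF. X c \<notin> \<rat>"
  proof (rule ccontr)
    assume "\<not> ?thesis"
    then have "countable (X ` cantorF)"
      by (intro countable_subset[OF _ countable_rat]) auto
    then show False
      using countable_image_inj_on[OF _ \<open>inj_on X cantorF\<close>] uncountable_cantorF by blast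
  qed
  then obtain c where c: "c \<in> cantorF" "X c \<notin> \<rat>" by blast
  define k where "k = Complex (X c) (c * X c)"
  have "k \<in> KK_fan"
    unfolding KK_fan_def KK_F_def k_def using c X[of c] by auto
  moreover have "z - k \<in> sphere 0 1"
    using X[of c] by (simp add: k_def dist_norm norm_minus_commute)
  ultimately show ?thesis
    unfolding set_sum_def by (intro CollectI exI[of _ k] exI[of _ "z - k"]) simp
qed

theorem mainTheorem7:
  shows "interior (set_sum KK_fan (sphere 0 1)) \<noteq> {}"
proof -
  let ?U = "{z. norm z < 1 \<and> Re z < 0 \<and> Im z < -1/2}"
  have "open ?U"
    by (intro open_Collect_conj open_Collect_less continuous_intros)
  moreover have "?U \<subseteq> set_sum KK_fan (sphere 0 1)"
    by (auto intro: mem_KK_fan_plus_sphere)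
  ultimately have "?U \<subseteq> interior (set_sum KK_fan (sphere 0 1))"
    by (rule interior_maximal[rotated])
  moreover have "Complex (-1/10) (-6/10) \<in> ?U"
    by (simp add: cmod_def power2_eq_square real_sqrt_lt_1_iff)
  ultimately show ?thesis by blast
qed

end
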